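(* Let $X$ be convex and let $f$ be $\alpha$-robustly quasiconvex for some $\alpha>0$, with $X\subset\operatorname{dom}f$. Then the set-valued map $\mathrm{Sol}(\cdot)$ is continuous (both upper and lower semicontinuous) at $0$ if and only if $\mathrm{Sol}(0)$ is a singleton and $X^\infty\cap\mathcal{K}_q(f)=\{0\}$.
   Context: Standing assumptions: $f:\mathbb{R}^n\to\mathbb{R}\cup\{\pm\infty\}$ is proper (never $-\infty$ and finite at some point) and lower semicontinuous; $X\subset\mathbb{R}^n$ is a nonempty closed set with $\operatorname{dom}f\cap X$ unbounded. $f$ is $\alpha$-robustly quasiconvex ($\alpha\ge0$) if $x\mapsto f(x)+\langle u,x\rangle$ is quasiconvex for every $u$ in the open ball $\mathbb{B}_\alpha$ of radius $\alpha$ about $0$ (quasiconvex: $g(\lambda x+(1-\lambda)y)\le\max\{g(x),g(y)\}$ for $x,y\in\operatorname{dom}g$, $\lambda\in[0,1]$). $X^\infty=\{u:\exists t_k\to+\infty,\ \exists x_k\in X,\ x_k/t_k\to u\}$. $f^\infty_q(u)=\sup_{x\in\operatorname{dom}f}\sup_{t>0}\frac{f(x+tu)-f(x)}{t}$, $\mathcal{K}_q(f)=\{d: f^\infty_q(d)\le0\}$. $f_u(x)=f(x)-\langle u,x\rangle$, $\mathrm{Sol}(u)=\{x\in X: f_u(x)\le f_u(y)\ \forall y\in X\}$. $F$ is upper semicontinuous at $\bar u$ if for every open $V\supset F(\bar u)$ there is a neighborhood $U$ of $\bar u$ with $F(u)\subset V$ for $u\in U$; lower semicontinuous at $\bar u$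 if $F(\bar u)\neq\emptyset$ and for every open $V$ meeting $F(\bar u)$ there is a neighborhood $U$ of $\bar u$ with $F(u)\cap V\ne\emptyset$ for $u\in U$. *)

theory Defs
  imports "HOL-Analysis.Analysis"
begin

definition edom :: "('a \<Rightarrow> ereal) \<Rightarrow> 'a set" where
  "edom f = {x. f x < \<infinity>}"

definition proper_fun :: "('a \<Rightarrow> ereal) \<Rightarrow> bool" where
  "proper_fun f \<longleftrightarrow> (\<forall>x. f x \<noteq> -\<infinity>) \<and> (\<exists>x. f x \<noteq> \<infinity>)"

definition lsc_fun :: "('a::topological_space \<Rightarrow> ereal) \<Rightarrow> bool" where
  "lsc_fun f \<longleftrightarrow> (\<forall>x. f x \<le> Liminf (at x) f)"

definition quasiconvex_fun :: "('a::real_vector \<Rightarrow> ereal) \<Rightarrow> bool" where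
  "quasiconvex_fun g \<longleftrightarrow>
     (\<forall>x\<in>edom g. \<forall>y\<in>edom g. \<forall>l::real. 0 \<le> l \<and> l \<le> 1 \<longrightarrow>
        g (l *\<^sub>R x + (1 - l) *\<^sub>R y) \<le> max (g x) (g y))"

definition robustly_quasiconvex :: "real \<Rightarrow> ('a::real_inner \<Rightarrow> ereal) \<Rightarrow> bool" where
  "robustly_quasiconvex \<alpha> f \<longleftrightarrow>
     (\<forall>u. norm u < \<alpha> \<longrightarrow> quasiconvex_fun (\<lambda>x. f x + ereal (inner u x)))"

definition asymptotic_cone :: "'a::real_normed_vector set \<Rightarrow> 'a set" where
  "asymptotic_cone X = {u. \<exists>t::nat \<Rightarrow> real. \<exists>x. filterlim t at_top sequentially \<and>
      (\<forall>k. x k \<in> X) \<and> ((\<lambda>k. (1 / t k) *\<^sub>R x k) \<longlonglongrightarrow> u)}"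

definition q_asymptotic :: "('a::real_vector \<Rightarrow> ereal) \<Rightarrow> 'a \<Rightarrow> ereal" where
  "q_asymptotic f u =
     (SUP x\<in>edom f. SUP t\<in>{t::real. t > 0}. (f (x + t *\<^sub>R u) - f x) / ereal t)"

definition Kq :: "('a::real_vector \<Rightarrow> ereal) \<Rightarrow> 'a set" where
  "Kq f = {d. q_asymptotic f d \<le> 0}"

definition shifted :: "('a::real_inner \<Rightarrow> ereal) \<Rightarrow> 'a \<Rightarrow> 'a \<Rightarrow> ereal" where
  "shifted f u x = f x - ereal (inner u x)"

definition Sol :: "('a::real_inner \<Rightarrow> ereal) \<Rightarrow> 'a set \<Rightarrow> 'a \<Rightarrow> 'a set" where
  "Sol f X u = {x\<in>X. \<forall>y\<in>X. shifted f u x \<le> shifted f u y}"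

definition usc_setvalued_at :: "('a::metric_space \<Rightarrow> 'b::topological_space set) \<Rightarrow> 'a \<Rightarrow> bool" where
  "usc_setvalued_at F ub \<longleftrightarrow>
     (\<forall>V. open V \<and> F ub \<subseteq> V \<longrightarrow> (\<exists>e>0. \<forall>u\<in>ball ub e. F u \<subseteq> V))"

definition lsc_setvalued_at :: "('a::metric_space \<Rightarrow> 'b::topological_space set) \<Rightarrow> 'a \<Rightarrow> bool" where
  "lsc_setvalued_at F ub \<longleftrightarrow> F ub \<noteq> {} \<and>
     (\<forall>V. open V \<and> V \<inter> F ub \<noteq> {} \<longrightarrow> (\<exists>e>0. \<forall>u\<in>ball ub e. F u \<inter> V \<noteq> {}))"

end

theory Submission
  imports Defs
begin

text \<open>
  Write \<open>f\<^sub>u = f - \<langle>u, \<cdot>\<rangle>\<close>. The argmin map is monotone: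
  \<open>x \<in> Sol v\<close> and \<open>z \<in> Sol u\<close> give \<open>\<langle>u - v, z - x\<rangle> \<ge> 0\<close>. So if \<open>Sol 0\<close> contained
  two points \<open>x \<noteq> y\<close>, tilting by a small multiple \<open>u\<close> of \<open>y - x\<close> would push all of \<open>Sol u\<close>
  beyond the hyperplane through \<open>y\<close>, away from \<open>x\<close>, contradicting lower semicontinuity.
  A unique minimiser \<open>x\<close> forces \<open>X\<^sup>\<infinity> \<inter> K\<^sub>q(f) = {0}\<close>, since every \<open>d\<close> there has
  \<open>x + d \<in> X\<close> and \<open>f (x + d) \<le> f x\<close>.

  Conversely, if \<open>x\<close> is the unique minimiser, then by compactness and lower semicontinuity
  \<open>f\<close> exceeds \<open>f x\<close> by some \<open>\<delta> > 0\<close> on \<open>X \<inter> sphere x r\<close>, so \<open>f\<^sub>u x < f\<^sub>u\<close> there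
  for \<open>|u| < \<delta>/r\<close>. For \<open>|u| < \<alpha>\<close> the function \<open>f\<^sub>u\<close> is quasiconvex, which propagates the
  strict inequality radially to all of \<open>X\<close> outside \<open>ball x r\<close>; minimising \<open>f\<^sub>u\<close> over the
  compact set \<open>X \<inter> cball x r\<close> then gives \<open>{} \<noteq> Sol u \<subseteq> ball x r\<close>.
\<close>

lemma lsc_fun_iff_eventually:
  "lsc_fun f \<longleftrightarrow> (\<forall>x c. c < f x \<longrightarrow> eventually (\<lambda>y. c < f y) (at x))"
  unfolding lsc_fun_def le_Liminf_iff by blast

lemma closed_sublevel_lsc:
  assumes "lsc_fun F"
  shows "closed {x. F x \<le> c}"
proof -
  have "open {x. c < F x}"
  proof (rule Topological_Spaces.openI)
    fix x assume "x \<in> {x. c < F x}"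
    then have x: "c < F x" by simp
    with assms have "eventually (\<lambda>y. c < F y) (at x)"
      unfolding lsc_fun_iff_eventually by blast
    then obtain S where S: "open S" "x \<in> S" "\<And>y. y \<in> S \<Longrightarrow> y \<noteq> x \<Longrightarrow> c < F y"
      unfolding eventually_at_topological by blast
    show "\<exists>T. open T \<and> x \<in> T \<and> T \<subseteq> {x. c < F x}"
      using S x by (intro exI[of _ S]) auto
  qed
  moreover have "- {x. F x \<le> c} = {x. c < F x}"
    by auto
  ultimately show ?thesis
    by (simp add: closed_def)
qed

lemma lsc_fun_add_continuous:
  fixes f :: "'a::topological_space \<Rightarrow> ereal"
  assumes "lsc_fun f" and "continuous_on UNIV g"
  shows "lsc_fun (\<lambda>x. f x + ereal (g x))"
  unfolding lsc_fun_iff_eventually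
proof (intro allI impI)
  fix x c assume "c < f x + ereal (g x)"
  then have "c - ereal (g x) < f x"
    by (simp add: ereal_minus_less)
  then obtain b0 b1 where b: "c - ereal (g x) < ereal b0" "b0 < b1" "ereal b1 < f x"
    by (meson ereal_dense2 less_ereal.simps(1))
  have c: "c < ereal (b0 + g x)"
    using b(1) by (simp add: ereal_minus_less)
  have "eventually (\<lambda>y. ereal b1 < f y) (at x)"
    using assms(1) b(3) by (simp add: lsc_fun_iff_eventually)
  moreover have "eventually (\<lambda>y. g x - (b1 - b0) < g y) (at x)"
    using assms(2) b(2) by (intro order_tendstoD) (auto simp: continuous_on_def)
  ultimately show "eventually (\<lambda>y. c < f y + ereal (g y)) (at x)"
  proof eventually_elim
    case (elim y)
    have "ereal (b0 + g x) < ereal b1 + ereal (g y)"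
      using elim(2) by simp
    also have "\<dots> < f y + ereal (g y)"
      using elim(1) by (cases "f y") auto
    finally show ?case using c by (rule order.strict_trans[rotated])
  qed
qed

lemma lsc_fun_shifted:
  fixes f :: "'a::real_inner \<Rightarrow> ereal"
  assumes "lsc_fun f"
  shows "lsc_fun (shifted f u)"
proof -
  have "shifted f u = (\<lambda>x. f x + ereal (- inner u x))"
    by (auto simp: shifted_def fun_eq_iff minus_ereal_def)
  then show ?thesis
    using lsc_fun_add_continuous[OF assms, of "\<lambda>x. - inner u x"]
    by (simp add: continuous_on_minus continuous_on_inner continuous_on_id continuous_on_const)
qed

lemma lsc_attains_min:
  assumes "lsc_fun F" and "compact K" and "K \<noteq> {}"
  shows "\<exists>z\<in>K. \<forall>y\<in>K. F z \<le> F y"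
proof -
  have "K \<inter> (\<Inter>y\<in>K. {x. F x \<le> F y}) \<noteq> {}"
  proof (rule compact_imp_fip_image[OF assms(2)])
    show "closed {x. F x \<le> F y}" for y
      using assms(1) by (rule closed_sublevel_lsc)
  next
    fix I assume I: "finite I" "I \<subseteq> K"
    show "K \<inter> (\<Inter>y\<in>I. {x. F x \<le> F y}) \<noteq> {}"
    proof (cases "I = {}")
      case True
      then show ?thesis using assms(3) by simp
    next
      case False
      define z where "z = arg_min_on F I"
      have "z \<in> I"
        unfolding z_def using I(1) False by (rule arg_min_if_finite(1))
      moreover have "F z \<le> F y" if "y \<in> I" for y
        unfolding z_def using I(1) False that by (rule arg_min_least)
      ultimately show ?thesis
        using I(2) by blast
    qed
  qed
  then show ?thesis by blast
qed

lemma proper_fun_edomE: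
  assumes "proper_fun f" and "x \<in> edom f"
  obtains a where "f x = ereal a"
  using assms by (cases "f x") (auto simp: proper_fun_def edom_def)

lemma shifted_zero [simp]: "shifted f 0 = f"
  by (simp add: shifted_def fun_eq_iff zero_ereal_def[symmetric])

lemma edom_shifted [simp]: "edom (shifted f u) = edom f"
proof -
  have "f x - ereal (inner u x) < \<infinity> \<longleftrightarrow> f x < \<infinity>" for x
    by (cases "f x") auto
  then show ?thesis
    by (simp add: edom_def shifted_def)
qed

lemma Sol_zero: "Sol f X 0 = {x \<in> X. \<forall>y\<in>X. f x \<le> f y}"
  by (simp add: Sol_def)

lemma robustly_quasiconvex_shifted:
  assumes "robustly_quasiconvex \<alpha> f" and "norm u < \<alpha>"
  shows "quasiconvex_fun (shifted f u)"
proof -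
  have "shifted f u = (\<lambda>x. f x + ereal (inner (- u) x))"
    by (simp add: shifted_def fun_eq_iff minus_ereal_def)
  moreover have "quasiconvex_fun (\<lambda>x. f x + ereal (inner (- u) x))"
    using assms(1)[unfolded robustly_quasiconvex_def, rule_format, of "- u"] assms(2) by simp
  ultimately show ?thesis
    by simp
qed

lemma quasiconvex_strict_min_beyond_sphere:
  fixes F :: "'a::real_normed_vector \<Rightarrow> ereal"
  assumes "quasiconvex_fun F" and "convex X" and "X \<subseteq> edom F" and "x \<in> X" and "r > 0"
    and sphere: "\<And>w. w \<in> X \<Longrightarrow> dist w x = r \<Longrightarrow> F x < F w"
    and "y \<in> X" and "r \<le> dist y x"
  shows "F x < F y"
proof (rule ccontr)
  assume "\<not> F x < F y"
  define l where "l = r / dist y x"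
  have l: "0 \<le> l" "l \<le> 1"
    using assms(5,8) by (auto simp: l_def divide_le_eq_1)
  define w where "w = l *\<^sub>R y + (1 - l) *\<^sub>R x"
  have "w \<in> X"
    unfolding w_def using convexD[OF assms(2) \<open>y \<in> X\<close> \<open>x \<in> X\<close>, of l "1 - l"] l by simp
  have "w - x = l *\<^sub>R (y - x)"
    by (simp add: w_def algebra_simps)
  then have "dist w x = l * dist y x"
    using l by (simp add: dist_norm)
  then have "dist w x = r"
    using assms(5,8) by (auto simp: l_def)
  have "F w \<le> max (F y) (F x)"
    using assms(1,3) \<open>y \<in> X\<close> \<open>x \<in> X\<close> l unfolding quasiconvex_fun_def w_def by blast
  also have "\<dots> = F x"
    using \<open>\<not> F x < F y\<close> by simp
  finally show False
    using sphere[OF \<open>w \<in> X\<close> \<open>dist w x = r\<close>] by simp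
qed

lemma Sol_unique_strict_min_on_sphere:
  fixes f :: "'a::euclidean_space \<Rightarrow> ereal"
  assumes "lsc_fun f" and "closed X" and "Sol f X 0 = {x}" and "r > 0"
    and "X \<inter> sphere x r \<noteq> {}"
  obtains w0 where "w0 \<in> X" and "dist w0 x = r" and "f x < f w0"
    and "\<And>w. w \<in> X \<Longrightarrow> dist w x = r \<Longrightarrow> f w0 \<le> f w"
proof -
  have "compact (X \<inter> sphere x r)"
    using assms(2) by (simp add: closed_Int_compact)
  then obtain w0 where w0: "w0 \<in> X" "dist w0 x = r"
    and w0_min: "\<And>w. w \<in> X \<Longrightarrow> dist w x = r \<Longrightarrow> f w0 \<le> f w"
    using lsc_attains_min[OF assms(1) _ assms(5)] by (auto simp: dist_commute)
  have x_min: "\<And>y. y \<in> X \<Longrightarrow> f x \<le> f y"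
    using assms(3) by (auto simp: Sol_zero)
  have "f x < f w0"
  proof (rule ccontr)
    assume "\<not> f x < f w0"
    then have "w0 \<in> Sol f X 0"
      using w0(1) x_min order_trans unfolding Sol_zero not_less by blast
    then show False
      using assms(3,4) w0(2) by simp
  qed
  then show ?thesis
    using that w0 w0_min by blast
qed

lemma Sol_unique_sphere_margin:
  fixes f :: "'a::euclidean_space \<Rightarrow> ereal"
  assumes "proper_fun f" and "lsc_fun f" and "closed X" and "X \<subseteq> edom f"
    and "Sol f X 0 = {x}" and "r > 0"
  shows "\<exists>e>0. \<forall>u w. norm u < e \<longrightarrow> w \<in> X \<longrightarrow> dist w x = r \<longrightarrow> shifted f u x < shifted f u w"
proof (cases "X \<inter> sphere x r = {}")
  case True
  then show ?thesis
    by (intro exI[of _ 1]) (auto simp: dist_commute)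
next
  case False
  then obtain w0 where "w0 \<in> X" and "f x < f w0"
    and w0_min: "\<And>w. w \<in> X \<Longrightarrow> dist w x = r \<Longrightarrow> f w0 \<le> f w"
    using Sol_unique_strict_min_on_sphere[OF assms(2,3,5,6)] by blast
  have "x \<in> X"
    using assms(5) by (auto simp: Sol_def)
  obtain a where a: "f x = ereal a"
    using proper_fun_edomE[OF assms(1)] assms(4) \<open>x \<in> X\<close> by (metis subsetD)
  obtain b where b: "f w0 = ereal b"
    using proper_fun_edomE[OF assms(1)] assms(4) \<open>w0 \<in> X\<close> by (metis subsetD)
  show ?thesis
  proof (intro exI[of _ "(b - a) / r"] conjI allI impI)
    show "(b - a) / r > 0"
      using \<open>f x < f w0\<close> a b assms(6) by simp
    fix u :: 'a and w assume u: "norm u < (b - a) / r" and "w \<in> X" and w: "dist w x = r"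
    obtain c where c: "f w = ereal c"
      using proper_fun_edomE[OF assms(1)] assms(4) \<open>w \<in> X\<close> by (metis subsetD)
    have "b \<le> c"
      using w0_min[OF \<open>w \<in> X\<close> w] b c by simp
    have "inner u (w - x) \<le> norm u * norm (w - x)"
      by (rule norm_cauchy_schwarz)
    also have "\<dots> = norm u * r"
      using w by (simp add: dist_norm)
    also have "\<dots> < b - a"
      using u assms(6) by (simp add: field_simps)
    finally show "shifted f u x < shifted f u w"
      using \<open>b \<le> c\<close> a c by (simp add: shifted_def inner_diff_right)
  qed
qed

lemma Sol_unique_uniform_separation:
  fixes f :: "'a::euclidean_space \<Rightarrow> ereal"
  assumes "proper_fun f" and "lsc_fun f" and "closed X" and "convex X" and "X \<subseteq> edom f"
    and "\<alpha> > 0" and "robustly_quasiconvex \<alpha> f"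
    and "Sol f X 0 = {x}" and "r > 0"
  shows "\<exists>e>0. \<forall>u. norm u < e \<longrightarrow> (\<forall>y\<in>X. r \<le> dist y x \<longrightarrow> shifted f u x < shifted f u y)"
proof -
  obtain e where "e > 0"
    and e: "\<And>u w. norm u < e \<Longrightarrow> w \<in> X \<Longrightarrow> dist w x = r \<Longrightarrow> shifted f u x < shifted f u w"
    using Sol_unique_sphere_margin[OF assms(1,2,3,5,8,9)] by blast
  have "x \<in> X"
    using assms(8) by (auto simp: Sol_def)
  show ?thesis
  proof (intro exI[of _ "min e \<alpha>"] conjI allI impI ballI)
    show "min e \<alpha> > 0"
      using \<open>e > 0\<close> assms(6) by simp
    fix u :: 'a and y assume u: "norm u < min e \<alpha>" and "y \<in> X" and "r \<le> dist y x"
    show "shifted f u x < shifted f u y"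
    proof (rule quasiconvex_strict_min_beyond_sphere
        [OF _ assms(4) _ \<open>x \<in> X\<close> assms(9) _ \<open>y \<in> X\<close> \<open>r \<le> dist y x\<close>])
      show "quasiconvex_fun (shifted f u)"
        using assms(7) u by (intro robustly_quasiconvex_shifted) auto
      show "X \<subseteq> edom (shifted f u)"
        using assms(5) by simp
      show "shifted f u x < shifted f u w" if "w \<in> X" and "dist w x = r" for w
        using e[OF _ that] u by simp
    qed
  qed
qed

lemma Sol_nonempty_in_ball_if_separated:
  fixes f :: "'a::{real_inner, heine_borel} \<Rightarrow> ereal"
  assumes "lsc_fun f" and "closed X" and "x \<in> X" and "r > 0"
    and sep: "\<And>y. y \<in> X \<Longrightarrow> r \<le> dist y x \<Longrightarrow> shifted f u x < shifted f u y"
  shows "Sol f X u \<noteq> {}" and "Sol f X u \<subseteq> ball x r"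
proof -
  show "Sol f X u \<subseteq> ball x r"
  proof
    fix z assume "z \<in> Sol f X u"
    then have "z \<in> X" and "shifted f u z \<le> shifted f u x"
      using assms(3) by (auto simp: Sol_def)
    then have "\<not> r \<le> dist z x"
      using sep[of z] by (meson leD)
    then show "z \<in> ball x r"
      by (simp add: dist_commute)
  qed
  have x_in: "x \<in> X \<inter> cball x r"
    using assms(3,4) by simp
  have "compact (X \<inter> cball x r)"
    using assms(2) by (simp add: closed_Int_compact)
  then obtain z where z: "z \<in> X \<inter> cball x r"
    and z_min: "\<forall>y\<in>X \<inter> cball x r. shifted f u z \<le> shifted f u y"
    using lsc_attains_min[OF lsc_fun_shifted[OF assms(1)]] x_in by blast
  have "shifted f u z \<le> shifted f u y" if "y \<in> X" for y
  proof (cases "y \<in> cball x r")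
    case True
    then show ?thesis
      using z_min that by blast
  next
    case False
    then have "r \<le> dist y x"
      by (simp add: dist_commute)
    then have "shifted f u x < shifted f u y"
      using sep[OF that] by blast
    moreover have "shifted f u z \<le> shifted f u x"
      using z_min x_in by blast
    ultimately show ?thesis
      by simp
  qed
  then have "z \<in> Sol f X u"
    using z by (simp add: Sol_def)
  then show "Sol f X u \<noteq> {}"
    by blast
qed

lemma Sol_unique_imp_shrinking:
  fixes f :: "'a::euclidean_space \<Rightarrow> ereal"
  assumes "proper_fun f" and "lsc_fun f" and "closed X" and "convex X" and "X \<subseteq> edom f"
    and "\<alpha> > 0" and "robustly_quasiconvex \<alpha> f"
    and "Sol f X 0 = {x}" and "r > 0"
  shows "\<exists>e>0. \<forall>u\<in>ball 0 e. Sol f X u \<noteq> {} \<and> Sol f X u \<subseteq> ball x r"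
proof -
  obtain e where "e > 0"
    and sep: "\<forall>u. norm u < e \<longrightarrow> (\<forall>y\<in>X. r \<le> dist y x \<longrightarrow> shifted f u x < shifted f u y)"
    using Sol_unique_uniform_separation[OF assms] by blast
  have "x \<in> X"
    using assms(8) by (auto simp: Sol_def)
  have "Sol f X u \<noteq> {} \<and> Sol f X u \<subseteq> ball x r" if "u \<in> ball 0 e" for u
    using Sol_nonempty_in_ball_if_separated[OF assms(2,3) \<open>x \<in> X\<close> assms(9), of u] sep that
    by simp
  then show ?thesis
    using \<open>e > 0\<close> by blast
qed

lemma usc_lsc_setvalued_at_singleton:
  fixes F :: "'a::metric_space \<Rightarrow> 'b::metric_space set"
  assumes "F a = {b}"
    and shrink: "\<And>r. r > 0 \<Longrightarrow> \<exists>e>0. \<forall>u\<in>ball a e. F u \<noteq> {} \<and> F u \<subseteq> ball b r"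
  shows "usc_setvalued_at F a" and "lsc_setvalued_at F a"
proof -
  have nbhd: "\<exists>e>0. \<forall>u\<in>ball a e. F u \<noteq> {} \<and> F u \<subseteq> V" if "open V" and "b \<in> V" for V
  proof -
    have "\<exists>r>0. ball b r \<subseteq> V"
      using open_contains_ball_eq[OF that(1)] that(2) by simp
    then obtain r where "r > 0" and "ball b r \<subseteq> V"
      by blast
    moreover obtain e where "e > 0" and "\<forall>u\<in>ball a e. F u \<noteq> {} \<and> F u \<subseteq> ball b r"
      using shrink[OF \<open>r > 0\<close>] by blast
    ultimately show ?thesis
      by blast
  qed
  show "usc_setvalued_at F a"
    unfolding usc_setvalued_at_def
  proof (intro allI impI)
    fix V assume V: "open V \<and> F a \<subseteq> V"
    then have "b \<in> V"
      using assms(1) by simp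
    then obtain e where "e > 0" and "\<forall>u\<in>ball a e. F u \<noteq> {} \<and> F u \<subseteq> V"
      using nbhd[OF conjunct1[OF V]] by blast
    then show "\<exists>e>0. \<forall>u\<in>ball a e. F u \<subseteq> V"
      by blast
  qed
  show "lsc_setvalued_at F a"
    unfolding lsc_setvalued_at_def
  proof (intro conjI allI impI)
    show "F a \<noteq> {}"
      using assms(1) by simp
    fix V assume V: "open V \<and> V \<inter> F a \<noteq> {}"
    then have "b \<in> V"
      using assms(1) by simp
    then obtain e where "e > 0" and e: "\<forall>u\<in>ball a e. F u \<noteq> {} \<and> F u \<subseteq> V"
      using nbhd[OF conjunct1[OF V]] by blast
    have "F u \<inter> V \<noteq> {}" if "u \<in> ball a e" for u
      using e that by (simp add: Int_absorb2)
    then show "\<exists>e>0. \<forall>u\<in>ball a e. F u \<inter> V \<noteq> {}"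
      using \<open>e > 0\<close> by blast
  qed
qed

lemma Sol_monotone:
  assumes "proper_fun f" and "X \<subseteq> edom f" and "x \<in> Sol f X v" and "z \<in> Sol f X u"
  shows "0 \<le> inner (u - v) (z - x)"
proof -
  have "x \<in> X" "z \<in> X"
    using assms(3,4) by (auto simp: Sol_def)
  then obtain a c where a: "f x = ereal a" and c: "f z = ereal c"
    using proper_fun_edomE[OF assms(1)] assms(2) by (metis subsetD)
  have "shifted f v x \<le> shifted f v z" and "shifted f u z \<le> shifted f u x"
    using assms(3,4) \<open>x \<in> X\<close> \<open>z \<in> X\<close> by (auto simp: Sol_def)
  then show ?thesis
    using a c by (simp add: shifted_def inner_diff_left inner_diff_right)
qed

lemma inner_pos_if_closer:
  fixes x y z :: "'a::real_inner"
  assumes "norm (z - x) < norm (y - x)"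
  shows "0 < inner (y - x) (y - z)"
proof -
  have "inner (y - x) (z - x) \<le> norm (y - x) * norm (z - x)"
    by (rule norm_cauchy_schwarz)
  also have "\<dots> < norm (y - x) * norm (y - x)"
    using assms by (intro mult_strict_left_mono) auto
  also have "\<dots> = inner (y - x) (y - x)"
    by (simp add: dot_square_norm power2_eq_square)
  finally show ?thesis
    by (simp add: inner_diff_right)
qed

lemma lsc_setvalued_Sol_imp_singleton:
  fixes f :: "'a::real_inner \<Rightarrow> ereal"
  assumes "proper_fun f" and "X \<subseteq> edom f" and "lsc_setvalued_at (Sol f X) 0"
  shows "\<exists>x. Sol f X 0 = {x}"
proof -
  obtain x where x: "x \<in> Sol f X 0"
    using assms(3) by (auto simp: lsc_setvalued_at_def)
  have "y = x" if y: "y \<in> Sol f X 0" for y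
  proof (rule ccontr)
    assume "y \<noteq> x"
    then have "ball x (dist y x) \<inter> Sol f X 0 \<noteq> {}"
      using x by (metis IntI centre_in_ball empty_iff zero_less_dist_iff)
    then obtain e where "e > 0"
      and e: "\<And>u. u \<in> ball 0 e \<Longrightarrow> Sol f X u \<inter> ball x (dist y x) \<noteq> {}"
      using assms(3) unfolding lsc_setvalued_at_def by (meson open_ball)
    define c where "c = e / (2 * norm (y - x))"
    have "c > 0"
      using \<open>y \<noteq> x\<close> \<open>e > 0\<close> by (simp add: c_def)
    define u where "u = c *\<^sub>R (y - x)"
    have "norm u = e / 2"
      using \<open>y \<noteq> x\<close> \<open>e > 0\<close> by (simp add: u_def c_def)
    then obtain z where z: "z \<in> Sol f X u" and "dist x z < dist y x"
      using e[of u] \<open>e > 0\<close> by auto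
    then have "0 < inner (y - x) (y - z)"
      by (intro inner_pos_if_closer) (simp add: dist_norm norm_minus_commute)
    then have "0 < c * inner (y - x) (y - z)"
      using \<open>c > 0\<close> by simp
    moreover have "0 \<le> inner u (z - y)"
      using Sol_monotone[OF assms(1,2) y z] by simp
    moreover have "inner u (z - y) = - (c * inner (y - x) (y - z))"
      by (simp add: u_def inner_diff_right algebra_simps)
    ultimately show False
      by linarith
  qed
  then show ?thesis
    using x by blast
qed

lemma asymptotic_cone_add_mem:
  fixes X :: "'a::real_normed_vector set"
  assumes "closed X" and "convex X" and "d \<in> asymptotic_cone X" and "x \<in> X"
  shows "x + d \<in> X"
proof -
  obtain t xs where t: "filterlim t at_top sequentially" and xs: "\<And>k. xs k \<in> X"
    and lim: "(\<lambda>k. (1 / t k) *\<^sub>R xs k) \<longlonglongrightarrow> d"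
    using assms(3) unfolding asymptotic_cone_def by blast
  define z where "z k = (1 - inverse (t k)) *\<^sub>R x + (1 / t k) *\<^sub>R xs k" for k
  have "(\<lambda>k. inverse (t k)) \<longlonglongrightarrow> 0"
    using t by (rule tendsto_inverse_0_at_top)
  then have "z \<longlonglongrightarrow> (1 - 0) *\<^sub>R x + d"
    unfolding z_def by (intro tendsto_intros lim)
  moreover have "eventually (\<lambda>k. z k \<in> X) sequentially"
    using t unfolding filterlim_at_top
  proof (rule eventually_mono[OF spec[of _ 1]])
    fix k assume "1 \<le> t k"
    then have "0 \<le> inverse (t k)" and "inverse (t k) \<le> 1"
      by (auto simp: inverse_le_1_iff)
    then show "z k \<in> X"
      unfolding z_def using convexD[OF assms(2,4) xs, of "1 - inverse (t k)" "inverse (t k)"]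
      by (simp add: divide_inverse)
  qed
  ultimately show ?thesis
    using Lim_in_closed_set[OF assms(1)] by fastforce
qed

lemma zero_mem_asymptotic_cone:
  assumes "x \<in> X"
  shows "0 \<in> asymptotic_cone X"
proof -
  have "(\<lambda>k. (1 / real k) *\<^sub>R x) \<longlonglongrightarrow> 0 *\<^sub>R x"
    by (intro tendsto_scaleR lim_1_over_n tendsto_const)
  then show ?thesis
    unfolding asymptotic_cone_def using filterlim_real_sequentially assms
    by (intro CollectI exI[of _ real] exI[of _ "\<lambda>k. x"]) auto
qed

lemma zero_mem_Kq:
  assumes "proper_fun f"
  shows "0 \<in> Kq f"
proof -
  have "(f (x + t *\<^sub>R 0) - f x) / ereal t \<le> 0" if x: "x \<in> edom f" for x t
  proof -
    obtain a where "f x = ereal a"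
      using proper_fun_edomE[OF assms x] .
    then show ?thesis
      by simp
  qed
  then show ?thesis
    by (simp add: Kq_def q_asymptotic_def SUP_least)
qed

lemma Kq_descent:
  assumes "proper_fun f" and "x \<in> edom f" and "d \<in> Kq f"
  shows "f (x + d) \<le> f x"
proof -
  have "(f (x + 1 *\<^sub>R d) - f x) / ereal 1 \<le> q_asymptotic f d"
    unfolding q_asymptotic_def
    by (rule SUP_upper2[OF assms(2)], rule SUP_upper) simp
  also have "\<dots> \<le> 0"
    using assms(3) by (simp add: Kq_def)
  finally have "f (x + d) - f x \<le> 0"
    by (simp add: one_ereal_def[symmetric])
  moreover obtain a where "f x = ereal a"
    using proper_fun_edomE[OF assms(1,2)] .
  ultimately show ?thesis
    by (simp add: ereal_minus_le_iff)
qed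

lemma Sol_singleton_imp_asymptotic_cone_Int_Kq:
  assumes "proper_fun f" and "closed X" and "convex X" and "X \<subseteq> edom f"
    and "Sol f X 0 = {x}"
  shows "asymptotic_cone X \<inter> Kq f = {0}"
proof -
  have "x \<in> X" and x_min: "\<And>y. y \<in> X \<Longrightarrow> f x \<le> f y"
    using assms(5) by (auto simp: Sol_zero)
  have "d = 0" if "d \<in> asymptotic_cone X" and "d \<in> Kq f" for d
  proof -
    have "x + d \<in> X"
      using asymptotic_cone_add_mem[OF assms(2,3) that(1) \<open>x \<in> X\<close>] .
    moreover have "f (x + d) \<le> f x"
      using Kq_descent[OF assms(1) _ that(2)] assms(4) \<open>x \<in> X\<close> by blast
    ultimately have "x + d \<in> Sol f X 0"
      using x_min order_trans unfolding Sol_zero by blast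
    then show "d = 0"
      using assms(5) by simp
  qed
  then show ?thesis
    using zero_mem_asymptotic_cone[OF \<open>x \<in> X\<close>] zero_mem_Kq[OF assms(1)] by blast
qed

theorem mainTheorem13:
  fixes f :: "'a::euclidean_space \<Rightarrow> ereal" and X :: "'a set" and \<alpha> :: real
  assumes "proper_fun f" and "lsc_fun f"
    and "closed X" and "X \<noteq> {}" and "\<not> bounded (edom f \<inter> X)"
    and "convex X" and "\<alpha> > 0" and "robustly_quasiconvex \<alpha> f"
    and "X \<subseteq> edom f"
  shows "(usc_setvalued_at (Sol f X) 0 \<and> lsc_setvalued_at (Sol f X) 0) \<longleftrightarrow>
         ((\<exists>x. Sol f X 0 = {x}) \<and> asymptotic_cone X \<inter> Kq f = {0})"
proof
  assume "usc_setvalued_at (Sol f X) 0 \<and> lsc_setvalued_at (Sol f X) 0"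
  then obtain x where x: "Sol f X 0 = {x}"
    using lsc_setvalued_Sol_imp_singleton[OF assms(1,9)] by blast
  then show "(\<exists>x. Sol f X 0 = {x}) \<and> asymptotic_cone X \<inter> Kq f = {0}"
    using Sol_singleton_imp_asymptotic_cone_Int_Kq[OF assms(1,3,6,9) x] by blast
next
  assume "(\<exists>x. Sol f X 0 = {x}) \<and> asymptotic_cone X \<inter> Kq f = {0}"
  then obtain x where x: "Sol f X 0 = {x}"
    by blast
  show "usc_setvalued_at (Sol f X) 0 \<and> lsc_setvalued_at (Sol f X) 0"
    using usc_lsc_setvalued_at_singleton[OF x Sol_unique_imp_shrinking[OF assms(1,2,3,6,9,7,8) x]]
    by blast
qed

end
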